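(* Let $\mathcal D\subset\mathbb R^3$ be a polyhedral cone with edges $E_i=\{tp_i:t\ge0\}$, $i=1,\dots,N_0$, and $\hat E=\bigcup_iE_i$. (i) For any $i\in\{1,\dots,N_0\}$ and all $x\in\mathcal D$, $d(x,E_i)\le\big|x-|x|p_i\big|\le2\,d(x,E_i)$. (ii) Let $\alpha_1,\dots,\alpha_{N_0}\in\mathbb R$. There exists $N=N(\mathcal D,\alpha_1,\dots,\alpha_{N_0})>0$ such that for any $x\in\mathcal D$, $r>0$ and $k$ with $d(x,\hat E)=d(x,E_k)$, $$N^{-1}\Big(\frac{d(x,E_k)\wedge r}{|x|\wedge r}\Big)^{\alpha_k}\le\prod_{i=1}^{N_0}\Big(\frac{d(x,E_i)\wedge r}{|x|\wedge r}\Big)^{\alpha_i}\le N\Big(\frac{d(x,E_k)\wedge r}{|x|\wedge r}\Big)^{\alpha_k}.$$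
   Context: Polyhedral cone: $\mathcal M\subset\mathbb S^2$ is a connected open subset of the unit sphere whose boundary has $N_0\ge3$ vertices $p_1,\dots,p_{N_0}$ and whose sides are arcs of great circles; $\mathcal D=\{x\in\mathbb R^3\setminus\{\mathbf 0\}:x/|x|\in\mathcal M\}$. (The paper additionally assumes that near each $p_i$, $\mathcal D$ coincides locally with a translated wedge $\{(\rho\cos\theta,\rho\sin\theta):\rho>0,0<\theta<\kappa_i\}\times\mathbb R$ up to rotation, $\kappa_i\in(0,2\pi)\setminus\{\pi\}$, and near other boundary points of $\mathcal M$ locally with a half ball.) *)

theory Defs
  imports "HOL-Analysis.Analysis"
begin

abbreviation S2 :: "(real^3) set" where "S2 \<equiv> sphere 0 1"

definition great_arc :: "real^3 \<Rightarrow> real^3 \<Rightarrow> (real^3) set \<Rightarrow> bool" where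
  "great_arc p q A \<longleftrightarrow> (\<exists>u \<theta>. norm u = 1 \<and> u \<bullet> p = 0 \<and> 0 < \<theta> \<and> \<theta> < 2 * pi \<and>
      A = (\<lambda>t. cos t *\<^sub>R p + sin t *\<^sub>R u) ` {0..\<theta>} \<and>
      q = cos \<theta> *\<^sub>R p + sin \<theta> *\<^sub>R u)"

definition cone_over :: "(real^3) set \<Rightarrow> (real^3) set" where
  "cone_over M = {x. x \<noteq> 0 \<and> (1 / norm x) *\<^sub>R x \<in> M}"

definition wedge :: "real \<Rightarrow> (real^3) set" where
  "wedge \<kappa> = {y. \<exists>\<rho> \<theta> z. \<rho> > 0 \<and> 0 < \<theta> \<and> \<theta> < \<kappa> \<and>
                    y = vector [\<rho> * cos \<theta>, \<rho> * sin \<theta>, z]}"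

definition ray :: "real^3 \<Rightarrow> (real^3) set" where
  "ray p = {t *\<^sub>R p | t. t \<ge> 0}"

text \<open>Polyhedral cone data: M is a connected open subset of the unit sphere whose
  (relative) boundary is the closed spherical polygon with consecutive vertices
  p 1, ..., p N0 (indices cyclic), sides being great-circle arcs; near each vertex the
  cone is locally a rotated translated wedge of opening kappa \<noteq> pi, and near the
  other boundary points locally a half ball.\<close>
definition polyhedral_cone :: "nat \<Rightarrow> (nat \<Rightarrow> real^3) \<Rightarrow> (real^3) set \<Rightarrow> bool" where
  "polyhedral_cone N0 p M \<longleftrightarrow>
     3 \<le> N0 \<and> M \<subseteq> S2 \<and> openin (top_of_set S2) M \<and> connected M \<and> M \<noteq> {} \<and>
     inj_on p {1..N0} \<and> (\<forall>i\<in>{1..N0}. p i \<in> S2) \<and>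
     (\<exists>A. (\<forall>i\<in>{1..N0}. great_arc (p i) (p (i mod N0 + 1)) (A i)) \<and>
          closure M - M = (\<Union>i\<in>{1..N0}. A i)) \<and>
     (\<forall>i\<in>{1..N0}. \<exists>\<epsilon>>0. \<exists>R \<kappa>. orthogonal_transformation R \<and> 0 < \<kappa> \<and> \<kappa> < 2 * pi \<and>
          \<kappa> \<noteq> pi \<and>
          cone_over M \<inter> ball (p i) \<epsilon> = ball (p i) \<epsilon> \<inter> (\<lambda>y. p i + R y) ` wedge \<kappa>) \<and>
     (\<forall>q\<in>closure (cone_over M) - cone_over M - {0} - (\<Union>i\<in>{1..N0}. ray (p i)).
          \<exists>\<epsilon>>0. \<exists>n. n \<noteq> 0 \<and>
          cone_over M \<inter> ball q \<epsilon> = {y \<in> ball q \<epsilon>. n \<bullet> (y - q) > 0})"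

end

theory Submission imports Defs begin

text \<open>(i) For a unit vector \<open>p\<close> and a point \<open>t p\<close> of the ray, the triangle inequality
  together with \<open>\<bar>norm x - t\<bar> \<le> norm (x - t p)\<close> gives \<open>norm (x - norm x p) \<le> 2 norm (x - t p)\<close>.
  (ii) The edges \<open>p i\<close> are finitely many distinct unit vectors, hence \<open>\<delta>\<close>-separated for
  some \<open>\<delta> > 0\<close>; by (i) a point \<open>x\<close> is then at distance at least \<open>c norm x\<close>, \<open>c = \<delta>/4\<close>, from
  every edge but the nearest one. So all factors of the product except the \<open>k\<close>-th are
  ratios in \<open>[c, 1]\<close>, whose powers are bounded above and below by constants depending only
  on \<open>c\<close> and \<open>\<alpha>\<close>.\<close>

lemma scaleR_in_ray: "t \<ge> 0 \<Longrightarrow> t *\<^sub>R p \<in> ray p"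
  unfolding ray_def by blast

lemma ray_nonempty: "ray p \<noteq> {}"
  using scaleR_in_ray[of 0 p] by blast

lemma infdist_ray_le_norm: "infdist x (ray p) \<le> norm x"
  using infdist_le[OF scaleR_in_ray[of 0 p], of x] by simp

lemma infdist_ray_le_norm_diff: "infdist x (ray p) \<le> norm (x - norm x *\<^sub>R p)"
  using infdist_le[OF scaleR_in_ray[of "norm x" p], of x] by (simp add: dist_norm)

lemma norm_diff_le_2_infdist_ray:
  assumes "norm p = 1"
  shows "norm (x - norm x *\<^sub>R p) \<le> 2 * infdist x (ray p)"
proof -
  have "norm (x - norm x *\<^sub>R p) / 2 \<le> infdist x (ray p)"
    unfolding infdist_notempty[OF ray_nonempty]
  proof (rule cINF_greatest[OF ray_nonempty])
    fix a assume "a \<in> ray p"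
    then obtain t where t: "t \<ge> 0" "a = t *\<^sub>R p" unfolding ray_def by blast
    have "norm (x - norm x *\<^sub>R p) \<le> norm (x - t *\<^sub>R p) + norm (t *\<^sub>R p - norm x *\<^sub>R p)"
      using norm_diff_triangle_le by blast
    also have "norm (t *\<^sub>R p - norm x *\<^sub>R p) = \<bar>norm (t *\<^sub>R p) - norm x\<bar>"
      using assms t by (simp flip: scaleR_diff_left)
    also have "\<dots> \<le> norm (x - t *\<^sub>R p)"
      by (metis norm_minus_commute norm_triangle_ineq3)
    finally show "norm (x - norm x *\<^sub>R p) / 2 \<le> dist x a"
      using t by (simp add: dist_norm)
  qed
  then show ?thesis by simp
qed

lemma norm_diff_mult_le_infdist_rays:
  assumes "norm p = 1" "norm q = 1"
  shows "norm (p - q) * norm x \<le> 2 * (infdist x (ray p) + infdist x (ray q))"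
proof -
  have "norm (p - q) * norm x = norm (norm x *\<^sub>R p - norm x *\<^sub>R q)"
    by (simp flip: scaleR_diff_right)
  also have "\<dots> \<le> norm (x - norm x *\<^sub>R p) + norm (x - norm x *\<^sub>R q)"
    by (metis norm_diff_triangle_le norm_minus_commute order_refl)
  also have "\<dots> \<le> 2 * (infdist x (ray p) + infdist x (ray q))"
    unfolding distrib_left
    using norm_diff_le_2_infdist_ray[OF assms(1)] norm_diff_le_2_infdist_ray[OF assms(2)]
    by (rule add_mono)
  finally show ?thesis .
qed

lemma finite_inj_on_separated:
  fixes p :: "'a \<Rightarrow> 'b::metric_space"
  assumes "finite I" "inj_on p I"
  obtains \<delta> where "\<delta> > 0" "\<And>i j. i \<in> I \<Longrightarrow> j \<in> I \<Longrightarrow> i \<noteq> j \<Longrightarrow> \<delta> \<le> dist (p i) (p j)"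
proof -
  define D where "D = (\<lambda>(i, j). dist (p i) (p j)) ` ({(i, j). i \<noteq> j} \<inter> I \<times> I)"
  have "finite D"
    unfolding D_def using assms(1) by (intro finite_imageI) auto
  have "0 < d" if "d \<in> D" for d
    using that assms(2) unfolding D_def by (auto dest: inj_onD)
  then have "0 < Min (insert 1 D)"
    using \<open>finite D\<close> by simp
  moreover have "Min (insert 1 D) \<le> dist (p i) (p j)" if "i \<in> I" "j \<in> I" "i \<noteq> j" for i j
    using \<open>finite D\<close> that unfolding D_def by (intro Min_le) force+
  ultimately show ?thesis using that by blast
qed

lemma min_ratio_bounds:
  fixes c d n r :: real
  assumes "0 < c" "c \<le> 1" "c * n \<le> d" "d \<le> n" "0 < n" "0 < r"
  shows "c \<le> min d r / min n r" "min d r / min n r \<le> 1"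
proof -
  have "c * min n r \<le> c * n" "c * min n r \<le> c * r" "c * r \<le> r"
    using assms by (simp_all add: mult_left_mono)
  then have "c * min n r \<le> min d r"
    using assms(3) by simp
  moreover have "min d r \<le> min n r" using assms by auto
  ultimately show "c \<le> min d r / min n r" "min d r / min n r \<le> 1"
    using assms by (simp_all add: field_simps)
qed

lemma powr_between_bounds:
  fixes c f a :: real
  assumes "0 < c" "c \<le> f" "f \<le> 1"
  shows "c powr \<bar>a\<bar> \<le> f powr a" "f powr a \<le> 1 / c powr \<bar>a\<bar>"
proof -
  have lower: "c powr \<bar>a\<bar> \<le> f powr \<bar>a\<bar>"
    using assms by (simp add: powr_mono2)
  have upper: "f powr \<bar>a\<bar> \<le> 1"
    using assms powr_mono2[of "\<bar>a\<bar>" f 1] by simp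
  have pos: "0 < c powr \<bar>a\<bar>" "0 < f powr \<bar>a\<bar>"
    using assms by auto
  have "c powr \<bar>a\<bar> \<le> f powr a \<and> f powr a \<le> 1 / c powr \<bar>a\<bar>"
  proof (cases "a \<ge> 0")
    case True
    have "1 \<le> 1 / c powr \<bar>a\<bar>"
      using lower upper pos by simp
    with True lower upper show "c powr \<bar>a\<bar> \<le> f powr a \<and> f powr a \<le> 1 / c powr \<bar>a\<bar>"
      by simp
  next
    case False
    then have fa: "f powr a = 1 / f powr \<bar>a\<bar>"
      by (simp add: powr_minus_divide[symmetric])
    have "c powr \<bar>a\<bar> * f powr \<bar>a\<bar> \<le> 1"
      using lower upper pos by (intro mult_le_one) auto
    then have "c powr \<bar>a\<bar> \<le> 1 / f powr \<bar>a\<bar>"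
      using pos by (simp add: field_simps)
    moreover have "1 / f powr \<bar>a\<bar> \<le> 1 / c powr \<bar>a\<bar>"
      using lower pos by (simp add: frac_le)
    ultimately show "c powr \<bar>a\<bar> \<le> f powr a \<and> f powr a \<le> 1 / c powr \<bar>a\<bar>"
      unfolding fa by simp
  qed
  then show "c powr \<bar>a\<bar> \<le> f powr a" "f powr a \<le> 1 / c powr \<bar>a\<bar>"
    by auto
qed

lemma prod_between_bounds:
  fixes b g :: "'a \<Rightarrow> real"
  assumes "finite I" "k \<in> I" "0 \<le> g k"
    and "\<And>i. i \<in> I \<Longrightarrow> 0 < b i \<and> b i \<le> 1"
    and "\<And>i. i \<in> I - {k} \<Longrightarrow> b i \<le> g i \<and> g i \<le> 1 / b i"
  shows "prod b I * g k \<le> prod g I" "prod g I \<le> 1 / prod b I * g k"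
proof -
  have split: "prod h I = h k * prod h (I - {k})" for h :: "'a \<Rightarrow> real"
    using assms(1,2) by (simp add: prod.remove)
  have pos: "0 < prod b (I - {k})" "0 < prod b I"
    using assms(4) by (auto intro: prod_pos)
  have "prod b I \<le> prod b (I - {k})"
    unfolding split[of b] using assms(2,4) pos by (simp add: mult_left_le_one_le)
  also have "\<dots> \<le> prod g (I - {k})"
    using assms(4,5) by (intro prod_mono) (auto intro: less_imp_le)
  finally have lower: "prod b I \<le> prod g (I - {k})" .
  have "prod g (I - {k}) \<le> (\<Prod>i\<in>I - {k}. 1 / b i)"
    using assms(4,5) by (intro prod_mono) (auto intro: order_trans[OF less_imp_le])
  also have "\<dots> = 1 / prod b (I - {k})"
    by (simp add: prod_dividef)
  also have "\<dots> \<le> 1 / prod b I"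
    using pos \<open>prod b I \<le> prod b (I - {k})\<close> by (simp add: frac_le)
  finally have upper: "prod g (I - {k}) \<le> 1 / prod b I" .
  show "prod b I * g k \<le> prod g I" "prod g I \<le> 1 / prod b I * g k"
    unfolding split[of g] using mult_right_mono[OF lower assms(3)] mult_right_mono[OF upper assms(3)]
    by (simp_all add: mult.commute)
qed

lemma infdist_ray_ge_if_not_nearest:
  assumes "norm p = 1" "norm q = 1" "\<delta> \<le> norm (p - q)"
    and "infdist x (ray q) \<le> infdist x (ray p)"
  shows "\<delta> / 4 * norm x \<le> infdist x (ray p)"
proof -
  have "\<delta> * norm x \<le> norm (p - q) * norm x"
    using assms(3) by (simp add: mult_right_mono)
  also have "\<dots> \<le> 2 * (infdist x (ray p) + infdist x (ray q))"
    using norm_diff_mult_le_infdist_rays[OF assms(1,2)] .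
  finally show ?thesis
    using assms(4) by simp
qed

definition edge_ratio :: "real^3 \<Rightarrow> real \<Rightarrow> real^3 \<Rightarrow> real" where
  "edge_ratio x r p = min (infdist x (ray p)) r / min (norm x) r"

lemma edge_power_product_comparable:
  fixes p :: "'i \<Rightarrow> real^3" and \<alpha> :: "'i \<Rightarrow> real"
  assumes "finite I" "inj_on p I" "\<And>i. i \<in> I \<Longrightarrow> norm (p i) = 1" "0 \<notin> S"
  shows "\<exists>N>0. \<forall>x\<in>S. \<forall>r>0. \<forall>k\<in>I.
           infdist x (\<Union>i\<in>I. ray (p i)) = infdist x (ray (p k)) \<longrightarrow>
             1 / N * edge_ratio x r (p k) powr \<alpha> k \<le> (\<Prod>i\<in>I. edge_ratio x r (p i) powr \<alpha> i) \<and>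
             (\<Prod>i\<in>I. edge_ratio x r (p i) powr \<alpha> i) \<le> N * edge_ratio x r (p k) powr \<alpha> k"
proof -
  obtain \<delta> where "\<delta> > 0" and \<delta>: "\<And>i j. i \<in> I \<Longrightarrow> j \<in> I \<Longrightarrow> i \<noteq> j \<Longrightarrow> \<delta> \<le> dist (p i) (p j)"
    using finite_inj_on_separated[OF assms(1,2)] by blast
  define c where "c = min (\<delta> / 4) 1"
  have c: "0 < c" "c \<le> 1" "c \<le> \<delta> / 4"
    unfolding c_def using \<open>\<delta> > 0\<close> by auto
  define b where "b i = c powr \<bar>\<alpha> i\<bar>" for i
  have b: "0 < b i \<and> b i \<le> 1" for i
    unfolding b_def using c powr_mono2[of "\<bar>\<alpha> i\<bar>" c 1] by simp
  have "prod b I * edge_ratio x r (p k) powr \<alpha> k \<le> (\<Prod>i\<in>I. edge_ratio x r (p i) powr \<alpha> i) \<and>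
      (\<Prod>i\<in>I. edge_ratio x r (p i) powr \<alpha> i) \<le> 1 / prod b I * edge_ratio x r (p k) powr \<alpha> k"
    if "x \<in> S" "r > 0" "k \<in> I" and nearest: "infdist x (\<Union>i\<in>I. ray (p i)) = infdist x (ray (p k))"
    for x r k
  proof -
    have "x \<noteq> 0"
      using \<open>x \<in> S\<close> assms(4) by blast
    have "c * norm x \<le> infdist x (ray (p i))" if i: "i \<in> I - {k}" for i
    proof -
      have "infdist x (ray (p k)) \<le> infdist x (ray (p i))"
        using nearest i infdist_mono[of "ray (p i)" "\<Union>i\<in>I. ray (p i)" x] ray_nonempty by auto
      then have "\<delta> / 4 * norm x \<le> infdist x (ray (p i))"
        using i \<open>k \<in> I\<close> assms(3) \<delta>[of i k] by (intro infdist_ray_ge_if_not_nearest) (auto simp: dist_norm)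
      then show ?thesis
        using mult_right_mono[OF c(3) norm_ge_zero, of x] by linarith
    qed
    then have "c \<le> edge_ratio x r (p i) \<and> edge_ratio x r (p i) \<le> 1" if "i \<in> I - {k}" for i
      unfolding edge_ratio_def using that min_ratio_bounds[OF c(1,2) _ infdist_ray_le_norm]
        \<open>x \<noteq> 0\<close> \<open>r > 0\<close> by simp
    then have "b i \<le> edge_ratio x r (p i) powr \<alpha> i \<and> edge_ratio x r (p i) powr \<alpha> i \<le> 1 / b i"
      if "i \<in> I - {k}" for i
      unfolding b_def using that powr_between_bounds[OF c(1)] by blast
    then show ?thesis
      using prod_between_bounds[OF assms(1) \<open>k \<in> I\<close>, where b = b and g = "\<lambda>i. edge_ratio x r (p i) powr \<alpha> i"] b
      by simp
  qed
  moreover have "0 < prod b I"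
    using b by (simp add: prod_pos)
  ultimately show ?thesis
    by (intro exI[of _ "1 / prod b I"]) auto
qed

theorem lemma3p1:
  fixes N0 :: nat and p :: "nat \<Rightarrow> real^3" and M :: "(real^3) set"
  assumes "polyhedral_cone N0 p M"
  shows "(\<forall>i\<in>{1..N0}. \<forall>x\<in>cone_over M.
            infdist x (ray (p i)) \<le> norm (x - norm x *\<^sub>R p i) \<and>
            norm (x - norm x *\<^sub>R p i) \<le> 2 * infdist x (ray (p i))) \<and>
         (\<forall>\<alpha> :: nat \<Rightarrow> real. \<exists>N>0. \<forall>x\<in>cone_over M. \<forall>r>0. \<forall>k\<in>{1..N0}.
            infdist x (\<Union>i\<in>{1..N0}. ray (p i)) = infdist x (ray (p k)) \<longrightarrow>
              (1 / N) * (min (infdist x (ray (p k))) r / min (norm x) r) powr \<alpha> k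
                \<le> (\<Prod>i\<in>{1..N0}. (min (infdist x (ray (p i))) r / min (norm x) r) powr \<alpha> i) \<and>
              (\<Prod>i\<in>{1..N0}. (min (infdist x (ray (p i))) r / min (norm x) r) powr \<alpha> i)
                \<le> N * (min (infdist x (ray (p k))) r / min (norm x) r) powr \<alpha> k)"
proof -
  have inj: "inj_on p {1..N0}" and unit: "\<And>i. i \<in> {1..N0} \<Longrightarrow> norm (p i) = 1"
    using assms unfolding polyhedral_cone_def by auto
  have "0 \<notin> cone_over M"
    unfolding cone_over_def by blast
  then show ?thesis
    using edge_power_product_comparable[OF finite_atLeastAtMost inj unit]
      infdist_ray_le_norm_diff norm_diff_le_2_infdist_ray unit
    unfolding edge_ratio_def by simp
qed

end
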